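(* Let $\mathbb{G}$ be the class of DAGs on $V$. For a distribution $P$ and a DAG $G$ on $V$, each of the following statements implies the next: (1) $P$ is minimally Markovian w.r.t. $G$; (2) $G$ is a sparsest Markov graph of $P$; (3) $P$ is Pearl-minimal to $G$; (4) $P$ is causally minimal to $G$.
   Context: $J(P)$ denotes the set of conditional independence triples $(A,B,C)$ (disjoint subsets of $V$, $A\perp\!\!\!\perp B\mid C$) of $P$, and $J(G)$ the set of d-separation triples of the DAG $G$. $P$ is Markovian to $G$ if $J(G)\subseteq J(P)$. The skeleton $\mathrm{sk}(G)$ is the undirected graph obtained by removing arrowheads; $\mathrm{sk}(P)$ is the undirected graph on $V$ in which $i,j$ are adjacent iff there is no $C\subseteq V\setminus\{i,j\}$ with $i\perp\!\!\!\perp j\mid C$. $P$ is adjacency faithful w.r.t. $G$ if $\mathrm{sk}(P)=\mathrm{sk}(G)$; $P$ is minimally Markovian w.r.t. $G$ if $P$ is Markovian to $G$ and adjacency faithful w.r.t. $G$. With $|E(G)|$ the number of edges, $G\in\mathbb{G}$ is a sparsest Markov graph of $P$ if $P$ is Markovian to $G$ and $|E(G)|\le|E(G')|$ for all $G'\in\mathbb{G}$ to which $P$ is Markovian. $P$ is Pearl-minimal to $G\in\mathbb{G}$ if there is no $G'\in\mathbb{G}$ with $J(G)\subsetneq J(G')\subseteq J(P)$. $P$ is causally minimal to $G\in\mathbb{G}$ if $P$ is Markovian to $G$ and not Markovian to any proper subgraph $G'\in\mathbb{G}$ of $G$. *)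

theory Defs
  imports Main
begin

text \<open>A DAG on the finite vertex set V is given by its set of directed edges E
  (an edge (x,y) means x \<rightarrow> y). An independence model (such as J(P) of a
  distribution P) is a set of triples (A,B,C) meaning A independent of B given C.\<close>

type_synonym 'a triple = "'a set \<times> 'a set \<times> 'a set"

definition dag :: "'a set \<Rightarrow> ('a \<times> 'a) set \<Rightarrow> bool" where
  "dag V E \<longleftrightarrow> finite V \<and> E \<subseteq> V \<times> V \<and> acyclic E"

definition adj :: "('a \<times> 'a) set \<Rightarrow> 'a \<Rightarrow> 'a \<Rightarrow> bool" where
  "adj E x y \<longleftrightarrow> (x, y) \<in> E \<or> (y, x) \<in> E"

definition is_path :: "('a \<times> 'a) set \<Rightarrow> 'a \<Rightarrow> 'a \<Rightarrow> 'a list \<Rightarrow> bool" where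
  "is_path E a b xs \<longleftrightarrow> length xs \<ge> 2 \<and> distinct xs \<and> hd xs = a \<and> last xs = b \<and>
     (\<forall>i. Suc i < length xs \<longrightarrow> adj E (xs ! i) (xs ! Suc i))"

definition collider :: "('a \<times> 'a) set \<Rightarrow> 'a list \<Rightarrow> nat \<Rightarrow> bool" where
  "collider E xs i \<longleftrightarrow> (xs ! (i - 1), xs ! i) \<in> E \<and> (xs ! Suc i, xs ! i) \<in> E"

definition active_path :: "('a \<times> 'a) set \<Rightarrow> 'a set \<Rightarrow> 'a list \<Rightarrow> bool" where
  "active_path E C xs \<longleftrightarrow> (\<forall>i. 0 < i \<and> Suc i < length xs \<longrightarrow>
     (collider E xs i \<longrightarrow> (\<exists>w\<in>C. (xs ! i, w) \<in> E\<^sup>*)) \<and>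
     (\<not> collider E xs i \<longrightarrow> xs ! i \<notin> C))"

definition d_separated :: "('a \<times> 'a) set \<Rightarrow> 'a set \<Rightarrow> 'a set \<Rightarrow> 'a set \<Rightarrow> bool" where
  "d_separated E A B C \<longleftrightarrow>
     (\<forall>a\<in>A. \<forall>b\<in>B. \<not> (\<exists>xs. is_path E a b xs \<and> active_path E C xs))"

definition disjoint_triple :: "'a set \<Rightarrow> 'a triple \<Rightarrow> bool" where
  "disjoint_triple V t \<longleftrightarrow> (case t of (A, B, C) \<Rightarrow>
     A \<subseteq> V \<and> B \<subseteq> V \<and> C \<subseteq> V \<and> A \<inter> B = {} \<and> A \<inter> C = {} \<and> B \<inter> C = {})"

definition J_G :: "'a set \<Rightarrow> ('a \<times> 'a) set \<Rightarrow> 'a triple set" where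
  "J_G V E = {(A, B, C). disjoint_triple V (A, B, C) \<and> d_separated E A B C}"

definition markovian :: "'a set \<Rightarrow> 'a triple set \<Rightarrow> ('a \<times> 'a) set \<Rightarrow> bool" where
  "markovian V JP E \<longleftrightarrow> J_G V E \<subseteq> JP"

definition skel_G :: "('a \<times> 'a) set \<Rightarrow> 'a set set" where
  "skel_G E = {{x, y} | x y. (x, y) \<in> E}"

definition skel_P :: "'a set \<Rightarrow> 'a triple set \<Rightarrow> 'a set set" where
  "skel_P V JP = {{i, j} | i j. i \<in> V \<and> j \<in> V \<and> i \<noteq> j \<and>
      \<not> (\<exists>C. C \<subseteq> V - {i, j} \<and> ({i}, {j}, C) \<in> JP)}"

definition adjacency_faithful :: "'a set \<Rightarrow> 'a triple set \<Rightarrow> ('a \<times> 'a) set \<Rightarrow> bool" where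
  "adjacency_faithful V JP E \<longleftrightarrow> skel_P V JP = skel_G E"

definition minimally_markovian :: "'a set \<Rightarrow> 'a triple set \<Rightarrow> ('a \<times> 'a) set \<Rightarrow> bool" where
  "minimally_markovian V JP E \<longleftrightarrow> markovian V JP E \<and> adjacency_faithful V JP E"

definition sparsest_markov :: "'a set \<Rightarrow> 'a triple set \<Rightarrow> ('a \<times> 'a) set \<Rightarrow> bool" where
  "sparsest_markov V JP E \<longleftrightarrow> dag V E \<and> markovian V JP E \<and>
     (\<forall>E'. dag V E' \<and> markovian V JP E' \<longrightarrow> card E \<le> card E')"

text \<open>Pearl-minimality (read as including Markovianity, i.e. G is a minimal I-map).\<close>
definition pearl_minimal :: "'a set \<Rightarrow> 'a triple set \<Rightarrow> ('a \<times> 'a) set \<Rightarrow> bool" where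
  "pearl_minimal V JP E \<longleftrightarrow> dag V E \<and> markovian V JP E \<and>
     \<not> (\<exists>E'. dag V E' \<and> J_G V E \<subset> J_G V E' \<and> J_G V E' \<subseteq> JP)"

definition causally_minimal :: "'a set \<Rightarrow> 'a triple set \<Rightarrow> ('a \<times> 'a) set \<Rightarrow> bool" where
  "causally_minimal V JP E \<longleftrightarrow> markovian V JP E \<and>
     \<not> (\<exists>E'. E' \<subset> E \<and> dag V E' \<and> markovian V JP E')"

end

theory Submission
  imports Defs
begin

text \<open>Non-adjacent vertices of a DAG are d-separated by the parents of one of them, so every DAG to
  which P is Markovian contains the skeleton of P; as an acyclic edge set has as many edges as its
  skeleton, adjacency faithfulness makes G sparsest. If G is sparsest and
  J(G) \<subset> J(G') \<subseteq> J(P), then sk(G') \<subseteq> sk(G) forces equal skeletons, and J(G) \<subseteq> J(G') forces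
  equal v-structures; but DAGs with equal skeletons and v-structures have the same d-connecting
  paths (reroute a shortest one through suitable common children at its colliders), contradicting
  strictness. Finally, deleting edges only adds d-separations, and a deleted edge adds a new one
  between its endpoints, so Pearl-minimality excludes Markovian proper subgraphs.\<close>

definition open_triple :: "('a \<times> 'a) set \<Rightarrow> 'a set \<Rightarrow> 'a \<Rightarrow> 'a \<Rightarrow> 'a \<Rightarrow> bool" where
  "open_triple E C u v w \<longleftrightarrow> (((u,v)\<in>E \<and> (w,v)\<in>E) \<longrightarrow> (\<exists>c\<in>C. (v,c)\<in>E\<^sup>*)) \<and>
      (\<not>((u,v)\<in>E \<and> (w,v)\<in>E) \<longrightarrow> v \<notin> C)"

lemma open_triple_commute: "open_triple E C u v w = open_triple E C w v u"
  unfolding open_triple_def by blast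

lemma open_triple_cong:
  "open_triple E C w x y \<Longrightarrow> ((y,x)\<in>E \<longleftrightarrow> (z,x)\<in>E) \<Longrightarrow> open_triple E C w x z"
  unfolding open_triple_def by simp

lemma active_path_iff_open_triples: "active_path E C xs \<longleftrightarrow>
  (\<forall>i. 0<i \<and> Suc i < length xs \<longrightarrow> open_triple E C (xs!(i-1)) (xs!i) (xs!Suc i))"
  unfolding active_path_def open_triple_def collider_def by blast

definition is_walk :: "('a \<times> 'a) set \<Rightarrow> 'a \<Rightarrow> 'a \<Rightarrow> 'a list \<Rightarrow> bool" where
  "is_walk E a b xs \<longleftrightarrow> length xs \<ge> 2 \<and> xs!0 = a \<and> xs!(length xs - 1) = b \<and>
     (\<forall>i. Suc i < length xs \<longrightarrow> adj E (xs ! i) (xs ! Suc i))"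

text \<open>Walks may repeat vertices; active_path only inspects consecutive triples, so it applies to
  walks verbatim.\<close>

lemma is_path_iff_walk_distinct: "is_path E a b xs \<longleftrightarrow> is_walk E a b xs \<and> distinct xs"
  unfolding is_path_def is_walk_def
  by (metis hd_conv_nth last_conv_nth list.size(3) not_numeral_le_zero)

lemma adj_commute: "adj E x y = adj E y x"
  unfolding adj_def by blast

lemma acyclic_no_loop: "acyclic E \<Longrightarrow> (x,x)\<in>E \<Longrightarrow> False"
  by (meson acyclic_def trancl.r_into_trancl)

lemma acyclic_no_2cycle: "acyclic E \<Longrightarrow> (x,y)\<in>E \<Longrightarrow> (y,x)\<in>E \<Longrightarrow> False"
  by (meson acyclic_def trancl.r_into_trancl trancl_into_trancl)

lemma acyclic_no_3cycle: "acyclic E \<Longrightarrow> (x,y)\<in>E \<Longrightarrow> (y,z)\<in>E \<Longrightarrow> (z,x)\<in>E \<Longrightarrow> False"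
  by (meson acyclic_def trancl.r_into_trancl trancl_into_trancl)

lemma reaches_C_via_edge: "(p,q)\<in>E \<Longrightarrow> \<exists>c\<in>C. (q,c)\<in>E\<^sup>* \<Longrightarrow> \<exists>c\<in>C. (p,c)\<in>E\<^sup>*"
  by (meson converse_rtrancl_into_rtrancl)

lemma finite_dag_edges: "dag V E \<Longrightarrow> finite E"
  unfolding dag_def by (meson finite_SigmaI finite_subset)

lemma is_path_two: "adj E p r \<Longrightarrow> p \<noteq> r \<Longrightarrow> is_path E p r [p,r]"
  unfolding is_path_def by (auto simp: less_Suc_eq)

lemma is_path_three: "adj E p q \<Longrightarrow> adj E q r \<Longrightarrow> distinct [p,q,r] \<Longrightarrow> is_path E p r [p,q,r]"
  unfolding is_path_def by (auto simp: less_Suc_eq)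

lemma active_path_two: "active_path E C [p,r]"
  unfolding active_path_iff_open_triples by auto

lemma active_path_three: "active_path E C [p,q,r] \<longleftrightarrow> open_triple E C p q r"
  unfolding active_path_iff_open_triples by (auto simp: less_Suc_eq)

lemma J_G_singletons_no_active_path:
  "({p},{r},C) \<in> J_G V E \<Longrightarrow> is_path E p r xs \<Longrightarrow> active_path E C xs \<Longrightarrow> False"
  unfolding J_G_def d_separated_def by blast

lemma adjacent_not_in_J_G:
  "(x,y) \<in> E \<Longrightarrow> x \<noteq> y \<Longrightarrow> ({x},{y},C) \<notin> J_G V E"
  using J_G_singletons_no_active_path is_path_two active_path_two by (metis adj_def)

lemma active_path_rev:
  assumes "active_path E C xs" shows "active_path E C (rev xs)"
  unfolding active_path_iff_open_triples
proof (intro allI impI)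
  fix i assume i: "0<i \<and> Suc i < length (rev xs)"
  define j where "j = length xs - Suc i"
  have j: "0 < j" "Suc j < length xs" using i by (auto simp: j_def)
  have "open_triple E C (xs!(j-1)) (xs!j) (xs!Suc j)"
    using assms j unfolding active_path_iff_open_triples by blast
  moreover have "rev xs ! (i-1) = xs ! Suc j" "rev xs ! i = xs ! j" "rev xs ! Suc i = xs!(j-1)"
    using i by (auto simp: rev_nth j_def Suc_diff_Suc)
  ultimately show "open_triple E C (rev xs!(i-1)) (rev xs!i) (rev xs!Suc i)"
    by (simp add: open_triple_commute)
qed

lemma is_path_rev:
  assumes "is_path E a b xs" shows "is_path E b a (rev xs)"
  unfolding is_path_def
proof (intro conjI allI impI)
  have adj_step: "\<And>j. Suc j < length xs \<Longrightarrow> adj E (xs!j) (xs!Suc j)"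
    using assms unfolding is_path_def by blast
  fix i assume "Suc i < length (rev xs)"
  then show "adj E (rev xs ! i) (rev xs ! Suc i)"
    using adj_step[of "length xs - Suc (Suc i)"] by (auto simp: rev_nth adj_commute Suc_diff_Suc)
qed (use assms in \<open>auto simp: is_path_def hd_rev last_rev\<close>)

lemma d_separated_sym: "d_separated E A B C \<Longrightarrow> d_separated E B A C"
  unfolding d_separated_def by (metis active_path_rev is_path_rev)

text \<open>Following an active walk forward from an edge pointing forward: the walk stays directed
  until it reaches a collider, which must then have a descendant in C.\<close>
lemma active_walk_forward_edge:
  assumes adjw: "\<And>i. Suc i < length xs \<Longrightarrow> adj E (xs!i) (xs!Suc i)"
    and act: "active_path E C xs" and e: "(xs!k, xs!Suc k) \<in> E"
    and m: "m < length xs" "Suc k \<le> m"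
  shows "((xs!k, xs!m)\<in>E\<^sup>+ \<and> (xs!(m-1), xs!m)\<in>E) \<or>
         (\<exists>i. k<i \<and> i<m \<and> (xs!k,xs!i)\<in>E\<^sup>+ \<and> (\<exists>w\<in>C. (xs!i,w)\<in>E\<^sup>*))"
  using m(2,1)
proof (induction m rule: dec_induct)
  case base then show ?case using e by auto
next
  case (step n)
  have "n < length xs" using step by simp
  from step.IH[OF this] show ?case
  proof (elim disjE conjE)
    assume A: "(xs!k, xs!n)\<in>E\<^sup>+" "(xs!(n-1), xs!n)\<in>E"
    have open_n: "open_triple E C (xs!(n-1)) (xs!n) (xs!Suc n)"
      using act step unfolding active_path_iff_open_triples by auto
    show ?case
    proof (cases "(xs!Suc n, xs!n) \<in> E")
      case True
      then have "\<exists>w\<in>C. (xs!n,w)\<in>E\<^sup>*" using open_n A unfolding open_triple_def by blast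
      then show ?thesis using A step by auto
    next
      case False
      then have "(xs!n, xs!Suc n)\<in>E" using adjw step unfolding adj_def by auto
      then show ?thesis using A by auto
    qed
  qed (use step in auto)
qed

lemma d_separated_by_parents:
  assumes ac: "acyclic E" and xy: "x \<noteq> y" "\<not> adj E x y" "(x,y)\<notin>E\<^sup>+"
  shows "d_separated E {x} {y} {w. (w,x)\<in>E}"
  unfolding d_separated_def
proof clarsimp
  fix xs assume p: "is_path E x y xs" and act: "active_path E {w. (w,x)\<in>E} xs"
  let ?n = "length xs"
  have adjw: "\<And>i. Suc i < ?n \<Longrightarrow> adj E (xs!i) (xs!Suc i)"
    and x0: "xs!0 = x" and yl: "xs!(?n-1) = y" and n2: "?n \<ge> 2"
    using p unfolding is_path_iff_walk_distinct is_walk_def by auto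
  have n3: "?n \<ge> 3"
  proof (rule ccontr)
    assume "\<not> ?n \<ge> 3" then have "?n = 2" using n2 by auto
    then show False using adjw[of 0] x0 yl xy by auto
  qed
  have e0: "(xs!0, xs!Suc 0) \<in> E"
  proof (rule ccontr)
    assume nE: "(xs!0, xs!Suc 0) \<notin> E"
    then have e1: "(xs!1, x) \<in> E" using adjw[of 0] n3 x0 unfolding adj_def by auto
    have "open_triple E {w. (w,x)\<in>E} (xs!0) (xs!1) (xs!Suc 1)"
      using act n3 unfolding active_path_iff_open_triples by (metis diff_Suc_1 less_numeral_extra(1)
          numeral_3_eq_3 Suc_le_eq One_nat_def)
    then have "xs!1 \<notin> {w. (w,x)\<in>E}" using nE unfolding open_triple_def by auto
    then show False using e1 by simp
  qed
  have "((xs!0, xs!(?n-1))\<in>E\<^sup>+ \<and> (xs!(?n-1-1), xs!(?n-1))\<in>E) \<or>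
      (\<exists>i. 0<i \<and> i<?n-1 \<and> (xs!0,xs!i)\<in>E\<^sup>+ \<and> (\<exists>w\<in>{w. (w,x)\<in>E}. (xs!i,w)\<in>E\<^sup>*))"
    by (rule active_walk_forward_edge[OF adjw act e0]) (use n3 in simp_all)
  then consider "(xs!0, xs!(?n-1))\<in>E\<^sup>+" | i w where "(xs!0, xs!i)\<in>E\<^sup>+" "(xs!i,w)\<in>E\<^sup>*" "(w,x)\<in>E"
    by blast
  then show False
  proof cases
    case 1 then show False using x0 yl xy(3) by simp
  next
    case (2 i w)
    then have "(xs!0,w)\<in>E\<^sup>+" by (blast intro: trancl_rtrancl_trancl)
    then have "(x,x)\<in>E\<^sup>+" using 2(3) x0 by (simp add: trancl_into_trancl)
    then show False using ac unfolding acyclic_def by blast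
  qed
qed

text \<open>The separating set consists of the parents of whichever of x, y is not an ancestor of the
  other.\<close>
lemma nonadjacent_separated:
  assumes d: "dag V E" and xy: "x\<in>V" "y\<in>V" "x \<noteq> y" "\<not> adj E x y"
  shows "\<exists>C. ({x},{y},C)\<in>J_G V E \<and> (\<forall>w\<in>C. (w,x)\<in>E \<or> (w,y)\<in>E) \<and> C \<subseteq> V - {x,y}"
proof -
  have ac: "acyclic E" and EV: "E \<subseteq> V \<times> V" using d unfolding dag_def by auto
  have "(x,y)\<notin>E\<^sup>+ \<or> (y,x)\<notin>E\<^sup>+"
    using ac unfolding acyclic_def by (meson trancl_trans)
  then obtain C where s: "d_separated E {x} {y} C" and Cp: "\<forall>w\<in>C. (w,x)\<in>E \<or> (w,y)\<in>E"
  proof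
    assume "(x,y)\<notin>E\<^sup>+" then show ?thesis using d_separated_by_parents[OF ac xy(3,4)] that by auto
  next
    assume "(y,x)\<notin>E\<^sup>+"
    then have "d_separated E {y} {x} {w. (w,y)\<in>E}"
      using d_separated_by_parents[OF ac xy(3)[symmetric]] xy(4) adj_commute by metis
    then show ?thesis using d_separated_sym that by blast
  qed
  have "C \<subseteq> V - {x,y}"
    using Cp EV xy(4) acyclic_no_loop[OF ac] unfolding adj_def by blast
  then show ?thesis using s Cp xy unfolding J_G_def disjoint_triple_def by auto
qed

lemma nth_splice:
  assumes "i < j" "j < length xs" "k < length (take (Suc i) xs @ drop (Suc j) xs)"
  shows "(take (Suc i) xs @ drop (Suc j) xs) ! k = xs ! (if k \<le> i then k else k + (j - i))"
proof -
  have "Suc (j + k - Suc i) = k + j - i" if "\<not> k < Suc i" using that assms by simp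
  then show ?thesis using assms by (auto simp: nth_append)
qed

lemma is_walk_splice:
  assumes w: "is_walk E a b xs" and ab: "a \<noteq> b" and ij: "i < j" "j < length xs"
    and junction: "Suc j < length xs \<Longrightarrow> adj E (xs!i) (xs!Suc j)"
    and last: "Suc j = length xs \<Longrightarrow> xs!i = b"
  shows "is_walk E a b (take (Suc i) xs @ drop (Suc j) xs)"
proof -
  define ys where "ys = take (Suc i) xs @ drop (Suc j) xs"
  define g where "g k = (if k \<le> i then k else k + (j - i))" for k
  let ?n = "length xs"
  have adjw: "\<And>k. Suc k < ?n \<Longrightarrow> adj E (xs!k) (xs!Suc k)"
    and x0: "xs!0 = a" and yl: "xs!(?n-1) = b" using w unfolding is_walk_def by auto
  have len: "length ys = Suc i + (?n - Suc j)" using ij unfolding ys_def by simp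
  have nth: "ys!k = xs!(g k)" if "k < length ys" for k
    using nth_splice[OF ij] that unfolding ys_def g_def by blast
  have "2 \<le> length ys"
  proof (rule ccontr)
    assume "\<not> 2 \<le> length ys"
    then have "i = 0" "Suc j = ?n" using len ij by auto
    then show False using x0 last ab by simp
  qed
  moreover have "ys!0 = a" using nth[of 0] len x0 by (simp add: g_def)
  moreover have "ys!(length ys - 1) = b"
  proof (cases "Suc j = ?n")
    case True
    then show ?thesis using nth[of i] len ij last by (simp add: g_def)
  next
    case False
    then have "g (length ys - 1) = ?n - 1" using len ij by (simp add: g_def)
    then show ?thesis using nth[of "length ys - 1"] len yl by simp
  qed
  moreover have "adj E (ys!k) (ys!Suc k)" if k: "Suc k < length ys" for k
  proof (cases "k = i")
    case True
    then have "ys!k = xs!i" "ys!Suc k = xs!Suc j" "Suc j < ?n"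
      using nth[of k] nth[of "Suc k"] k ij len by (auto simp: g_def)
    then show ?thesis using junction by simp
  next
    case False
    then have "ys!k = xs!(g k)" "ys!Suc k = xs!Suc (g k)" "Suc (g k) < ?n"
      using nth[of k] nth[of "Suc k"] k len ij by (auto simp: g_def)
    then show ?thesis using adjw by simp
  qed
  ultimately show ?thesis unfolding is_walk_def ys_def by blast
qed

lemma active_path_splice:
  assumes act: "active_path E C xs" and ij: "i < j" "j < length xs"
    and junction1: "0 < i \<Longrightarrow> Suc j < length xs \<Longrightarrow>
      open_triple E C (xs!(i-1)) (xs!i) (xs!Suc j)"
    and junction2: "Suc (Suc j) < length xs \<Longrightarrow>
      open_triple E C (xs!i) (xs!Suc j) (xs!Suc (Suc j))"
  shows "active_path E C (take (Suc i) xs @ drop (Suc j) xs)"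
  unfolding active_path_iff_open_triples
proof (intro allI impI)
  define ys where "ys = take (Suc i) xs @ drop (Suc j) xs"
  define g where "g k = (if k \<le> i then k else k + (j - i))" for k
  let ?n = "length xs"
  have len: "length ys = Suc i + (?n - Suc j)" using ij unfolding ys_def by simp
  have nth: "ys!k = xs!(g k)" if "k < length ys" for k
    using nth_splice[OF ij] that unfolding ys_def g_def by blast
  have open_xs: "\<And>k. 0 < k \<Longrightarrow> Suc k < ?n \<Longrightarrow> open_triple E C (xs!(k-1)) (xs!k) (xs!Suc k)"
    using act unfolding active_path_iff_open_triples by blast
  fix k assume "0<k \<and> Suc k<length (take (Suc i) xs @ drop (Suc j) xs)"
  then have k: "0 < k" "Suc k < length ys" unfolding ys_def by auto
  consider "k < i" | "k = i" | "k = Suc i" | "Suc i < k" by linarith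
  then show "open_triple E C (ys!(k-1)) (ys!k) (ys!Suc k)"
  proof cases
    case 1
    then have "ys!(k-1) = xs!(k-1)" "ys!k = xs!k" "ys!Suc k = xs!Suc k"
      using nth[of "k-1"] nth[of k] nth[of "Suc k"] k by (auto simp: g_def)
    then show ?thesis using open_xs[of k] 1 k ij by simp
  next
    case 2
    then have "ys!(k-1) = xs!(i-1)" "ys!k = xs!i" "ys!Suc k = xs!Suc j" "Suc j < ?n"
      using nth[of "k-1"] nth[of k] nth[of "Suc k"] k len ij by (auto simp: g_def)
    then show ?thesis using junction1 2 k by simp
  next
    case 3
    then have "ys!(k-1) = xs!i" "ys!k = xs!Suc j" "ys!Suc k = xs!Suc (Suc j)" "Suc (Suc j) < ?n"
      using nth[of "k-1"] nth[of k] nth[of "Suc k"] k len ij by (auto simp: g_def)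
    then show ?thesis using junction2 by simp
  next
    case 4
    then have "g (k-1) = g k - 1" "g (Suc k) = Suc (g k)" "0 < g k" "Suc (g k) < ?n"
      using k len ij unfolding g_def by auto
    then show ?thesis using nth[of "k-1"] nth[of k] nth[of "Suc k"] k open_xs[of "g k"] by simp
  qed
qed

text \<open>Gluing an active walk at a repeated vertex keeps it open there: if the glued triple is a
  collider but the original one at the first visit is not, the walk leaves that visit forward and
  must meet a collider with a descendant in C before returning.\<close>
lemma open_triple_at_repeated_vertex:
  assumes ac: "acyclic E" and adjw: "\<And>k. Suc k < length xs \<Longrightarrow> adj E (xs!k) (xs!Suc k)"
    and act: "active_path E C xs" and ij: "0 < i" "i < j" "Suc j < length xs" "xs!i = xs!j"
  shows "open_triple E C (xs!(i-1)) (xs!i) (xs!Suc j)"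
  unfolding open_triple_def
proof (intro conjI impI)
  let ?v = "xs!i"
  have open_i: "open_triple E C (xs!(i-1)) ?v (xs!Suc i)"
    and open_j: "open_triple E C (xs!(j-1)) (xs!j) (xs!Suc j)"
    using act ij unfolding active_path_iff_open_triples by auto
  {
    assume col: "(xs!(i-1), ?v)\<in>E \<and> (xs!Suc j, ?v)\<in>E"
    show "\<exists>c\<in>C. (?v, c)\<in>E\<^sup>*"
    proof (cases "(xs!Suc i, ?v)\<in>E")
      case True then show ?thesis using open_i col unfolding open_triple_def by blast
    next
      case False
      then have ei: "(xs!i, xs!Suc i)\<in>E" using adjw[of i] ij unfolding adj_def by auto
      have "((xs!i, xs!j)\<in>E\<^sup>+ \<and> (xs!(j-1), xs!j)\<in>E) \<or>
          (\<exists>i'. i<i' \<and> i'<j \<and> (xs!i,xs!i')\<in>E\<^sup>+ \<and> (\<exists>w\<in>C. (xs!i',w)\<in>E\<^sup>*))"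
        by (rule active_walk_forward_edge[OF adjw act ei]) (use ij in simp_all)
      moreover have "(xs!i, xs!j)\<notin>E\<^sup>+" using ac ij unfolding acyclic_def by simp
      ultimately show ?thesis by (meson trancl_into_rtrancl rtrancl_trans)
    qed
  }
  assume "\<not> ((xs!(i-1), ?v)\<in>E \<and> (xs!Suc j, ?v)\<in>E)"
  then show "?v \<notin> C" using open_i open_j ij unfolding open_triple_def by auto
qed

lemma active_walk_imp_active_path:
  assumes ac: "acyclic E" and ab: "a \<noteq> b"
  shows "is_walk E a b xs \<Longrightarrow> active_path E C xs \<Longrightarrow> \<exists>ys. is_path E a b ys \<and> active_path E C ys"
proof (induction "length xs" arbitrary: xs rule: less_induct)
  case less
  note walk = less.prems(1) and act = less.prems(2)
  show ?case
  proof (cases "distinct xs")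
    case True
    then show ?thesis using less.prems by (auto simp: is_path_iff_walk_distinct)
  next
    case False
    then obtain i j where ij: "i < j" "j < length xs" and loop: "xs!i = xs!j"
      unfolding distinct_conv_nth by (metis linorder_neqE_nat)
    have adjw: "\<And>k. Suc k < length xs \<Longrightarrow> adj E (xs!k) (xs!Suc k)"
      and yl: "xs!(length xs - 1) = b" using walk unfolding is_walk_def by auto
    have last: "Suc j = length xs \<Longrightarrow> xs!i = b" using loop yl by (metis diff_Suc_1)
    have "is_walk E a b (take (Suc i) xs @ drop (Suc j) xs)"
      by (rule is_walk_splice[OF walk ab ij _ last]) (use adjw loop in auto)
    moreover have "active_path E C (take (Suc i) xs @ drop (Suc j) xs)"
      by (rule active_path_splice[OF act ij])
        (use open_triple_at_repeated_vertex[OF ac adjw act] ij loop act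
          in \<open>auto simp: active_path_iff_open_triples\<close>)
    moreover have "length (take (Suc i) xs @ drop (Suc j) xs) < length xs" using ij by simp
    ultimately show ?thesis using less.hyps by blast
  qed
qed

locale shortest_active_path =
  fixes E :: "('a \<times> 'a) set" and C :: "'a set" and a b :: 'a and xs :: "'a list"
  assumes acyclic: "acyclic E" and path: "is_path E a b xs" and active: "active_path E C xs"
    and shortest: "\<And>ys. is_path E a b ys \<Longrightarrow> active_path E C ys \<Longrightarrow> length xs \<le> length ys"
begin

lemma adj_step: "Suc k < length xs \<Longrightarrow> adj E (xs!k) (xs!Suc k)"
  using path unfolding is_path_def by blast

lemma open_at: "0 < k \<Longrightarrow> Suc k < length xs \<Longrightarrow> open_triple E C (xs!(k-1)) (xs!k) (xs!Suc k)"
  using active unfolding active_path_iff_open_triples by blast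

lemma nth_neq: "i < length xs \<Longrightarrow> j < length xs \<Longrightarrow> i \<noteq> j \<Longrightarrow> xs!i \<noteq> xs!j"
  using path nth_eq_iff_index_eq unfolding is_path_def by blast

lemma no_shortcut:
  assumes k: "0 < k" "Suc k < length xs" and xz: "adj E (xs!(k-1)) (xs!Suc k)"
  shows "\<not> ((2 \<le> k \<longrightarrow> open_triple E C (xs!(k-2)) (xs!(k-1)) (xs!Suc k)) \<and>
    (Suc (Suc k) < length xs \<longrightarrow> open_triple E C (xs!(k-1)) (xs!Suc k) (xs!Suc (Suc k))))"
proof
  assume J: "(2 \<le> k \<longrightarrow> open_triple E C (xs!(k-2)) (xs!(k-1)) (xs!Suc k)) \<and>
    (Suc (Suc k) < length xs \<longrightarrow> open_triple E C (xs!(k-1)) (xs!Suc k) (xs!Suc (Suc k)))"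
  define ys where "ys = take (Suc (k-1)) xs @ drop (Suc k) xs"
  have walk: "is_walk E a b xs" and dist: "distinct xs"
    using path by (auto simp: is_path_iff_walk_distinct)
  have ab: "a \<noteq> b"
  proof -
    have "length xs \<ge> 2" using walk unfolding is_walk_def by simp
    then have "xs!0 \<noteq> xs!(length xs - 1)" by (intro nth_neq) auto
    then show ?thesis using walk unfolding is_walk_def by simp
  qed
  have "is_walk E a b ys"
    unfolding ys_def by (rule is_walk_splice[OF walk ab]) (use k xz in auto)
  moreover have "distinct ys"
    unfolding ys_def using k dist set_take_disj_set_drop_if_distinct[OF dist, of k "Suc k"] by simp
  moreover have "active_path E C ys"
    unfolding ys_def
    by (rule active_path_splice[OF active]) (use k J in \<open>auto simp: numeral_2_eq_2 Suc_diff_Suc\<close>)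
  moreover have "length ys < length xs" using k unfolding ys_def by simp
  ultimately show False using shortest[of ys] by (simp add: is_path_iff_walk_distinct)
qed

lemma open_shortcut_left:
  assumes k: "0 < k" "Suc k < length xs"
    and same: "(xs!k, xs!(k-1))\<in>E \<longleftrightarrow> (xs!Suc k, xs!(k-1))\<in>E"
  shows "2 \<le> k \<longrightarrow> open_triple E C (xs!(k-2)) (xs!(k-1)) (xs!Suc k)"
proof
  assume "2 \<le> k"
  then have "open_triple E C (xs!(k-1-1)) (xs!(k-1)) (xs!Suc (k-1))" using k by (intro open_at) auto
  moreover have "k-1-1 = k-2" "Suc (k-1) = k" using k by auto
  ultimately show "open_triple E C (xs!(k-2)) (xs!(k-1)) (xs!Suc k)"
    using same by (auto intro: open_triple_cong)
qed

lemma open_shortcut_right: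
  assumes k: "0 < k" "Suc k < length xs"
    and same: "(xs!k, xs!Suc k)\<in>E \<longleftrightarrow> (xs!(k-1), xs!Suc k)\<in>E"
  shows "Suc (Suc k) < length xs \<longrightarrow> open_triple E C (xs!(k-1)) (xs!Suc k) (xs!Suc (Suc k))"
proof
  assume "Suc (Suc k) < length xs"
  then have "open_triple E C (xs!Suc (Suc k)) (xs!Suc k) (xs!k)"
    using open_at[of "Suc k"] by (simp add: open_triple_commute)
  then have "open_triple E C (xs!Suc (Suc k)) (xs!Suc k) (xs!(k-1))"
    using same by (rule open_triple_cong)
  then show "open_triple E C (xs!(k-1)) (xs!Suc k) (xs!Suc (Suc k))"
    by (simp add: open_triple_commute)
qed

text \<open>On a shortest active path, a triangle formed by three consecutive vertices must have its
  middle vertex as a common parent of the other two; otherwise the middle vertex could be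
  skipped.\<close>
lemma shielded_triple_fork:
  assumes k: "0 < k" "Suc k < length xs" and xz: "adj E (xs!(k-1)) (xs!Suc k)"
  shows "(xs!k, xs!(k-1))\<in>E \<and> (xs!k, xs!Suc k)\<in>E"
proof (rule ccontr)
  define x y z where "x = xs!(k-1)" and "y = xs!k" and "z = xs!Suc k"
  define w u where "w = xs!(k-2)" and "u = xs!Suc (Suc k)"
  note defs = x_def y_def z_def w_def u_def
  have no_skip: "\<not> ((2 \<le> k \<longrightarrow> open_triple E C w x z) \<and>
      (Suc (Suc k) < length xs \<longrightarrow> open_triple E C x z u))"
    using no_shortcut[OF k xz] unfolding defs .
  have left: "(y,x)\<in>E \<longleftrightarrow> (z,x)\<in>E \<Longrightarrow> 2 \<le> k \<longrightarrow> open_triple E C w x z"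
    using open_shortcut_left[OF k] unfolding defs by blast
  have right: "(y,z)\<in>E \<longleftrightarrow> (x,z)\<in>E \<Longrightarrow> Suc (Suc k) < length xs \<longrightarrow> open_triple E C x z u"
    using open_shortcut_right[OF k] unfolding defs by blast
  have open_y: "open_triple E C x y z" using open_at[OF k] unfolding defs .
  have open_x: "2 \<le> k \<longrightarrow> open_triple E C w x y"
    using open_at[of "k-1"] k unfolding defs by (auto simp: numeral_2_eq_2 Suc_diff_Suc)
  have open_z: "Suc (Suc k) < length xs \<longrightarrow> open_triple E C y z u"
    using open_at[of "Suc k"] k unfolding defs by simp
  have axy: "adj E x y" using adj_step[of "k-1"] k unfolding defs by simp
  have ayz: "adj E y z" using adj_step[of k] k unfolding defs by simp
  have axz: "adj E x z" using xz unfolding defs .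
  note no2 = acyclic_no_2cycle[OF acyclic] and no3 = acyclic_no_3cycle[OF acyclic]
  assume "\<not> ((xs!k, xs!(k-1))\<in>E \<and> (xs!k, xs!Suc k)\<in>E)"
  then consider "(x,y)\<in>E" "(z,y)\<in>E" | "(x,y)\<in>E" "(y,z)\<in>E" | "(z,y)\<in>E" "(y,x)\<in>E"
    using axy ayz unfolding defs adj_def by blast
  then show False
  proof cases
    case 1
    have y_reaches: "\<exists>c\<in>C. (y,c)\<in>E\<^sup>*" using open_y 1 unfolding open_triple_def by blast
    show False
    proof (cases "(x,z)\<in>E")
      case True
      have "Suc (Suc k) < length xs \<longrightarrow> open_triple E C x z u"
        using open_z 1 no2 reaches_C_via_edge[OF 1(2) y_reaches] unfolding open_triple_def by blast
      then show False using no_skip left 1 True no2 by blast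
    next
      case False
      then have zx: "(z,x)\<in>E" using axz unfolding adj_def by blast
      have "2 \<le> k \<longrightarrow> open_triple E C w x z"
        using open_x 1 no2 reaches_C_via_edge[OF 1(1) y_reaches] unfolding open_triple_def by blast
      then show False using no_skip right 1 zx no2 by blast
    qed
  next
    case 2
    then have "(x,z)\<in>E" using axz no3 unfolding adj_def by blast
    then show False using no_skip left right 2 no2 by blast
  next
    case 3
    then have "(z,x)\<in>E" using axz no3 unfolding adj_def by blast
    then show False using no_skip left right 3 no2 by blast
  qed
qed

lemma shielded_triple_left:
  assumes k: "0 < k" "Suc k < length xs" and xz: "(xs!(k-1), xs!Suc k)\<in>E"
  shows "2 \<le> k \<and> (xs!(k-2), xs!(k-1))\<in>E \<and> xs!(k-1) \<in> C"
proof -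
  have adj: "adj E (xs!(k-1)) (xs!Suc k)" using xz unfolding adj_def by blast
  have fork: "(xs!k, xs!(k-1))\<in>E" "(xs!k, xs!Suc k)\<in>E" using shielded_triple_fork[OF k adj] by auto
  then have "Suc (Suc k) < length xs \<longrightarrow> open_triple E C (xs!(k-1)) (xs!Suc k) (xs!Suc (Suc k))"
    using open_shortcut_right[OF k] xz by blast
  then have k2: "2 \<le> k" and blocked: "\<not> open_triple E C (xs!(k-2)) (xs!(k-1)) (xs!Suc k)"
    using no_shortcut[OF k adj] by auto
  have "(xs!Suc k, xs!(k-1)) \<notin> E" using xz acyclic_no_2cycle[OF acyclic] by blast
  then have "xs!(k-1) \<in> C" using blocked unfolding open_triple_def by blast
  moreover have "open_triple E C (xs!(k-2)) (xs!(k-1)) (xs!k)"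
    using open_at[of "k-1"] k k2 by (auto simp: numeral_2_eq_2 Suc_diff_Suc)
  ultimately show ?thesis using k2 fork unfolding open_triple_def by blast
qed

lemma shielded_triple_right:
  assumes k: "0 < k" "Suc k < length xs" and zx: "(xs!Suc k, xs!(k-1))\<in>E"
  shows "Suc (Suc k) < length xs \<and> (xs!Suc (Suc k), xs!Suc k)\<in>E \<and> xs!Suc k \<in> C"
proof -
  have adj: "adj E (xs!(k-1)) (xs!Suc k)" using zx unfolding adj_def by blast
  have fork: "(xs!k, xs!(k-1))\<in>E" "(xs!k, xs!Suc k)\<in>E" using shielded_triple_fork[OF k adj] by auto
  then have "2 \<le> k \<longrightarrow> open_triple E C (xs!(k-2)) (xs!(k-1)) (xs!Suc k)"
    using open_shortcut_left[OF k] zx by blast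
  then have k2: "Suc (Suc k) < length xs"
    and blocked: "\<not> open_triple E C (xs!(k-1)) (xs!Suc k) (xs!Suc (Suc k))"
    using no_shortcut[OF k adj] by auto
  have "(xs!(k-1), xs!Suc k) \<notin> E" using zx acyclic_no_2cycle[OF acyclic] by blast
  then have "xs!Suc k \<in> C" using blocked unfolding open_triple_def by blast
  moreover have "open_triple E C (xs!k) (xs!Suc k) (xs!Suc (Suc k))"
    using open_at[of "Suc k"] k2 by simp
  ultimately show ?thesis using k2 fork unfolding open_triple_def by blast
qed

lemma collider_unshielded:
  assumes k: "0 < k" "Suc k < length xs" and col: "(xs!(k-1), xs!k)\<in>E"
  shows "\<not> adj E (xs!(k-1)) (xs!Suc k)"
  using shielded_triple_fork[OF k] col acyclic_no_2cycle[OF acyclic] by blast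

end

definition v_structure :: "('a \<times> 'a) set \<Rightarrow> 'a \<Rightarrow> 'a \<Rightarrow> 'a \<Rightarrow> bool" where
  "v_structure E p q r \<longleftrightarrow> (p,q)\<in>E \<and> (r,q)\<in>E \<and> p \<noteq> r \<and> \<not> adj E p r"

definition reaches_in :: "('a \<times> 'a) set \<Rightarrow> 'a set \<Rightarrow> nat \<Rightarrow> 'a \<Rightarrow> bool" where
  "reaches_in E Z k c \<longleftrightarrow> (\<exists>w\<in>Z. (c,w) \<in> E ^^ k)"

lemma reaches_in_0: "reaches_in E Z 0 c \<longleftrightarrow> c \<in> Z"
  unfolding reaches_in_def by simp

lemma reaches_in_SucI: "(u,c)\<in>E \<Longrightarrow> reaches_in E Z k c \<Longrightarrow> reaches_in E Z (Suc k) u"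
  unfolding reaches_in_def using relpow_Suc_I2 by fast

lemma reaches_in_SucE: "reaches_in E Z (Suc k) c \<Longrightarrow> \<exists>d. (c,d)\<in>E \<and> reaches_in E Z k d"
  unfolding reaches_in_def using relpow_Suc_D2 by fast

lemma reaches_in_least:
  assumes "\<exists>w\<in>Z. (c,w)\<in>E\<^sup>*"
  obtains k where "reaches_in E Z k c" "\<And>m. m < k \<Longrightarrow> \<not> reaches_in E Z m c"
proof -
  obtain k0 where "reaches_in E Z k0 c"
    using assms unfolding reaches_in_def by (meson rtrancl_power)
  then show ?thesis using that ex_has_least_nat[of "\<lambda>k. reaches_in E Z k c" k0 "\<lambda>k. k"]
    by (meson leD)
qed

locale same_skeleton_and_v_structures =
  fixes E F :: "('a \<times> 'a) set"
  assumes acyclic_E: "acyclic E" and acyclic_F: "acyclic F"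
    and adj_iff: "\<And>p q. adj F p q \<longleftrightarrow> adj E p q"
    and v_structure_iff: "\<And>p q r. v_structure E p q r \<longleftrightarrow> v_structure F p q r"
begin

text \<open>Along a shortest directed E-path from c to Z no edge can be reversed in F: a reversed edge
  would create a v-structure in F that E does not have.\<close>
lemma shortest_descent_kept:
  "(u,c)\<in>E \<Longrightarrow> (u,c)\<in>F \<Longrightarrow> reaches_in E Z k c \<Longrightarrow> (\<And>m. m \<le> k \<Longrightarrow> \<not> reaches_in E Z m u)
    \<Longrightarrow> \<exists>w\<in>Z. (c,w)\<in>F\<^sup>*"
proof (induction k arbitrary: u c)
  case 0
  then show ?case by (auto simp: reaches_in_0)
next
  case (Suc k)
  obtain d where cd: "(c,d)\<in>E" and reach_d: "reaches_in E Z k d"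
    using reaches_in_SucE[OF Suc.prems(3)] by blast
  have cdF: "(c,d)\<in>F"
  proof (rule ccontr)
    assume "(c,d)\<notin>F"
    then have dc: "(d,c)\<in>F" using cd adj_iff unfolding adj_def by blast
    have "\<not> adj E u d"
    proof
      assume "adj E u d"
      then consider "(u,d)\<in>E" | "(d,u)\<in>E" unfolding adj_def by blast
      then show False
      proof cases
        case 1 then show False using reaches_in_SucI[OF _ reach_d] Suc.prems(4) by blast
      next
        case 2 then show False using acyclic_no_3cycle[OF acyclic_E Suc.prems(1) cd] by blast
      qed
    qed
    moreover have "u \<noteq> d" using Suc.prems(1) cd acyclic_no_2cycle[OF acyclic_E] by blast
    ultimately have "v_structure F u c d" using Suc.prems(2) dc adj_iff unfolding v_structure_def by blast
    then have "(d,c)\<in>E" using v_structure_iff unfolding v_structure_def by blast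
    then show False using cd acyclic_no_2cycle[OF acyclic_E] by blast
  qed
  have "\<not> reaches_in E Z m c" if "m \<le> k" for m
    using reaches_in_SucI[OF Suc.prems(1)] Suc.prems(4) that by (meson Suc_le_mono)
  then have "\<exists>w\<in>Z. (d,w)\<in>F\<^sup>*" using Suc.IH[OF cd cdF reach_d] by blast
  then show ?case using reaches_C_via_edge[OF cdF] by blast
qed

text \<open>A common child of non-adjacent x and y in both graphs that has a descendant in Z in E can be
  replaced by a common child with a descendant in Z in F: walk down a shortest E-path to Z until
  the first edge reversed in F; the head of that edge is again a common child of x and y.\<close>
lemma common_child_reaching:
  assumes xy: "x \<noteq> y" "\<not> adj E x y"
  shows "(x,c)\<in>E \<Longrightarrow> (y,c)\<in>E \<Longrightarrow> (x,c)\<in>F \<Longrightarrow> (y,c)\<in>F \<Longrightarrow> reaches_in E Z k c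
     \<Longrightarrow> (\<And>m. m < k \<Longrightarrow> \<not> reaches_in E Z m c)
     \<Longrightarrow> \<exists>c'. (x,c')\<in>F \<and> (y,c')\<in>F \<and> (\<exists>w\<in>Z. (c',w)\<in>F\<^sup>*)"
proof (induction k arbitrary: c)
  case 0
  then show ?case by (auto simp: reaches_in_0)
next
  case (Suc k)
  obtain d where cd: "(c,d)\<in>E" and reach_d: "reaches_in E Z k d"
    using reaches_in_SucE[OF Suc.prems(5)] by blast
  show ?case
  proof (cases "(c,d)\<in>F")
    case True
    have "\<exists>w\<in>Z. (d,w)\<in>F\<^sup>*"
      using shortest_descent_kept[OF cd True reach_d] Suc.prems(6) by (meson le_imp_less_Suc)
    then show ?thesis using reaches_C_via_edge[OF True] Suc.prems(3,4) by blast
  next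
    case False
    then have dc: "(d,c)\<in>F" using cd adj_iff unfolding adj_def by blast
    have parent_d: "(v,d)\<in>E" if v: "(v,c)\<in>E" "(v,c)\<in>F" for v
    proof -
      have "adj E v d"
      proof (rule ccontr)
        assume "\<not> adj E v d"
        moreover have "v \<noteq> d" using v cd acyclic_no_2cycle[OF acyclic_E] by blast
        ultimately have "v_structure F v c d" using v dc adj_iff unfolding v_structure_def by blast
        then have "(d,c)\<in>E" using v_structure_iff unfolding v_structure_def by blast
        then show False using cd acyclic_no_2cycle[OF acyclic_E] by blast
      qed
      then show "(v,d)\<in>E" using acyclic_no_3cycle[OF acyclic_E v(1) cd] unfolding adj_def by blast
    qed
    have xd: "(x,d)\<in>E" and yd: "(y,d)\<in>E" using parent_d Suc.prems(1-4) by blast+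
    then have "v_structure E x d y" using xy unfolding v_structure_def by blast
    then have "(x,d)\<in>F" "(y,d)\<in>F" using v_structure_iff unfolding v_structure_def by blast+
    moreover have "\<not> reaches_in E Z m d" if "m < k" for m
      using reaches_in_SucI[OF cd, of Z m] Suc.prems(6)[of "Suc m"] that by auto
    ultimately show ?thesis using Suc.IH[OF xd yd] reach_d by blast
  qed
qed

end

text \<open>The path used to transfer an active E-path to F: a shortest active E-path in which each
  collider is replaced by a common F-child of its neighbours that has a descendant in C.\<close>
locale rerouting = same_skeleton_and_v_structures E F + shortest_active_path E C a b xs
  for E F :: "('a \<times> 'a) set" and C :: "'a set" and a b :: 'a and xs :: "'a list"
begin

lemma collider_iff:
  assumes k: "0 < k" "Suc k < length xs"
  shows "collider F xs k \<longleftrightarrow> collider E xs k"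
proof (cases "adj E (xs!(k-1)) (xs!Suc k)")
  case False
  moreover have "xs!(k-1) \<noteq> xs!Suc k" using nth_neq k by simp
  ultimately show ?thesis
    using v_structure_iff[of "xs!(k-1)" "xs!k" "xs!Suc k"] adj_iff
    unfolding collider_def v_structure_def by blast
next
  case True
  have not_E: "\<not> collider E xs k"
    using shielded_triple_fork[OF k True] acyclic_no_2cycle[OF acyclic_E]
    unfolding collider_def by blast
  have not_F: "\<not> collider F xs k"
  proof
    assume colF: "collider F xs k"
    consider "(xs!(k-1), xs!Suc k)\<in>E" | "(xs!Suc k, xs!(k-1))\<in>E" using True unfolding adj_def by blast
    then show False
    proof cases
      case 1
      then have k2: "2 \<le> k" and wx: "(xs!(k-2), xs!(k-1))\<in>E" using shielded_triple_left[OF k] by auto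
      have k1: "0 < k-1" "Suc (k-1) < length xs" and nth: "xs!(k-1-1) = xs!(k-2)" "xs!Suc (k-1) = xs!k"
        using k k2 by (auto simp: numeral_2_eq_2)
      have "\<not> adj E (xs!(k-2)) (xs!k)" using collider_unshielded[OF k1] wx nth by simp
      moreover have "xs!(k-2) \<noteq> xs!k" using nth_neq k k2 by simp
      moreover have "(xs!k, xs!(k-1))\<in>E" using shielded_triple_fork[OF k True] by blast
      ultimately have "v_structure E (xs!(k-2)) (xs!(k-1)) (xs!k)" using wx unfolding v_structure_def by blast
      then have "(xs!k, xs!(k-1))\<in>F" using v_structure_iff unfolding v_structure_def by blast
      then show False using colF acyclic_no_2cycle[OF acyclic_F] unfolding collider_def by blast
    next
      case 2
      then have k2: "Suc (Suc k) < length xs" and uz: "(xs!Suc (Suc k), xs!Suc k)\<in>E"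
        using shielded_triple_right[OF k] by auto
      have k1: "0 < Suc k" "Suc (Suc k) < length xs" using k2 by auto
      have "(xs!k, xs!Suc k)\<in>E" using shielded_triple_fork[OF k True] by blast
      then have "\<not> adj E (xs!k) (xs!Suc (Suc k))" using collider_unshielded[OF k1] by simp
      moreover have "xs!k \<noteq> xs!Suc (Suc k)" using nth_neq k2 by simp
      ultimately have "v_structure E (xs!k) (xs!Suc k) (xs!Suc (Suc k))"
        using uz \<open>(xs!k, xs!Suc k)\<in>E\<close> unfolding v_structure_def by blast
      then have "(xs!k, xs!Suc k)\<in>F" using v_structure_iff unfolding v_structure_def by blast
      then show False using colF acyclic_no_2cycle[OF acyclic_F] unfolding collider_def by blast
    qed
  qed
  show ?thesis using not_E not_F by blast
qed

definition interior_collider :: "nat \<Rightarrow> bool" where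
  "interior_collider k \<longleftrightarrow> 0 < k \<and> Suc k < length xs \<and> collider E xs k"

definition good_child :: "nat \<Rightarrow> 'a \<Rightarrow> bool" where
  "good_child k c \<longleftrightarrow> (xs!(k-1),c)\<in>F \<and> (xs!Suc k,c)\<in>F \<and> (\<exists>w\<in>C. (c,w)\<in>F\<^sup>*)"

definition rerouted :: "'a list" where
  "rerouted = map (\<lambda>k. if interior_collider k then SOME c. good_child k c else xs!k) [0..<length xs]"

lemma good_child_exists:
  assumes "interior_collider k"
  shows "\<exists>c. good_child k c"
proof -
  have k: "0 < k" "Suc k < length xs" and col: "collider E xs k"
    using assms unfolding interior_collider_def by auto
  then have eE: "(xs!(k-1),xs!k)\<in>E" "(xs!Suc k, xs!k)\<in>E" unfolding collider_def by auto
  then have eF: "(xs!(k-1),xs!k)\<in>F" "(xs!Suc k, xs!k)\<in>F"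
    using collider_iff[OF k] col unfolding collider_def by auto
  have "\<exists>w\<in>C. (xs!k,w)\<in>E\<^sup>*" using open_at[OF k] eE unfolding open_triple_def by blast
  then obtain j where "reaches_in E C j (xs!k)" "\<And>m. m < j \<Longrightarrow> \<not> reaches_in E C m (xs!k)"
    by (rule reaches_in_least) auto
  moreover have "xs!(k-1) \<noteq> xs!Suc k" using nth_neq k by simp
  ultimately show ?thesis
    using common_child_reaching collider_unshielded[OF k eE(1)] eE eF unfolding good_child_def by blast
qed

lemma nth_rerouted:
  "k < length xs \<Longrightarrow> rerouted!k = (if interior_collider k then SOME c. good_child k c else xs!k)"
  unfolding rerouted_def by simp

lemma length_rerouted [simp]: "length rerouted = length xs"
  unfolding rerouted_def by simp

lemma good_child_rerouted: "interior_collider k \<Longrightarrow> good_child k (rerouted!k)"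
  using nth_rerouted someI_ex[OF good_child_exists] unfolding interior_collider_def by auto

lemma interior_collider_Suc: "interior_collider k \<Longrightarrow> \<not> interior_collider (Suc k)"
  using acyclic_no_2cycle[OF acyclic_E] unfolding interior_collider_def collider_def by auto

lemma rerouted_walk: "is_walk F a b rerouted"
proof -
  have walk: "is_walk E a b xs" using path by (simp add: is_path_iff_walk_distinct)
  have n2: "length xs \<ge> 2" and x0: "xs!0 = a" and yl: "xs!(length xs - 1) = b"
    using walk unfolding is_walk_def by auto
  have "\<not> interior_collider 0" "\<not> interior_collider (length xs - 1)"
    unfolding interior_collider_def by auto
  then have ends: "rerouted!0 = a" "rerouted!(length rerouted - 1) = b"
    using nth_rerouted[of 0] nth_rerouted[of "length xs - 1"] n2 x0 yl by force+
  have "adj F (rerouted!k) (rerouted!Suc k)" if k: "Suc k < length xs" for k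
  proof (cases "interior_collider k")
    case True
    then show ?thesis using good_child_rerouted nth_rerouted[of "Suc k"] interior_collider_Suc k
      unfolding good_child_def adj_def by auto
  next
    case False
    show ?thesis
    proof (cases "interior_collider (Suc k)")
      case True
      then show ?thesis using good_child_rerouted[OF True] nth_rerouted[of k] False k
        unfolding good_child_def adj_def by auto
    next
      case False2: False
      then show ?thesis using nth_rerouted[of k] nth_rerouted[of "Suc k"] False k adj_step adj_iff
        by auto
    qed
  qed
  then show ?thesis using n2 ends unfolding is_walk_def by simp
qed

lemma rerouted_active: "active_path F C rerouted"
  unfolding active_path_iff_open_triples
proof (intro allI impI)
  fix k assume "0 < k \<and> Suc k < length rerouted"
  then have k: "0 < k" "Suc k < length xs" by auto
  show "open_triple F C (rerouted!(k-1)) (rerouted!k) (rerouted!Suc k)"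
  proof (cases "interior_collider k")
    case True
    moreover have "\<not> interior_collider (k-1)" "\<not> interior_collider (Suc k)"
      using interior_collider_Suc[of "k-1"] interior_collider_Suc[of k] True k by auto
    ultimately show ?thesis
      using good_child_rerouted nth_rerouted[of "k-1"] nth_rerouted[of "Suc k"] k
      unfolding good_child_def open_triple_def by auto
  next
    case False
    then have not_col: "\<not> collider F xs k" using collider_iff[OF k] k unfolding interior_collider_def by auto
    have "xs!k \<notin> C"
      using open_at[OF k] False k unfolding open_triple_def interior_collider_def collider_def by auto
    moreover have "rerouted!k = xs!k" using nth_rerouted[of k] False k by simp
    moreover have "(rerouted!(k-1), xs!k)\<in>F \<Longrightarrow> (xs!(k-1), xs!k)\<in>F"
      using good_child_rerouted[of "k-1"] nth_rerouted[of "k-1"] k acyclic_no_2cycle[OF acyclic_F]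
      unfolding good_child_def by (cases "interior_collider (k-1)") auto
    moreover have "(rerouted!Suc k, xs!k)\<in>F \<Longrightarrow> (xs!Suc k, xs!k)\<in>F"
      using good_child_rerouted[of "Suc k"] nth_rerouted[of "Suc k"] k acyclic_no_2cycle[OF acyclic_F]
      unfolding good_child_def by (cases "interior_collider (Suc k)") auto
    ultimately show ?thesis using not_col unfolding open_triple_def collider_def by auto
  qed
qed

end

context same_skeleton_and_v_structures
begin

lemma active_path_transfer:
  assumes "is_path E a b xs0" and "active_path E C xs0"
  shows "\<exists>ys. is_path F a b ys \<and> active_path F C ys"
proof -
  obtain xs where path: "is_path E a b xs" and act: "active_path E C xs"
    and shortest: "\<And>ys. is_path E a b ys \<Longrightarrow> active_path E C ys \<Longrightarrow> length xs \<le> length ys"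
    using ex_has_least_nat[of "\<lambda>xs. is_path E a b xs \<and> active_path E C xs" xs0 length] assms by blast
  interpret rerouting E F C a b xs
    by unfold_locales (use acyclic_E path act shortest in auto)
  have "a \<noteq> b"
  proof -
    have "length xs \<ge> 2" using path unfolding is_path_def by simp
    then have "xs!0 \<noteq> xs!(length xs - 1)" by (intro nth_neq) auto
    then show ?thesis using path by (simp add: is_path_iff_walk_distinct is_walk_def)
  qed
  then show ?thesis using active_walk_imp_active_path[OF acyclic_F _ rerouted_walk rerouted_active] by blast
qed

end

lemma skel_G_iff_adj: "{x,y} \<in> skel_G E \<longleftrightarrow> adj E x y"
  unfolding skel_G_def adj_def by (auto simp: doubleton_eq_iff insert_commute)

lemma skel_G_image: "skel_G E = (\<lambda>(x,y). {x,y}) ` E"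
  unfolding skel_G_def by auto

lemma finite_skel_G: "finite E \<Longrightarrow> finite (skel_G E)"
  unfolding skel_G_image by simp

lemma card_skel_G_le: "finite E \<Longrightarrow> card (skel_G E) \<le> card E"
  unfolding skel_G_image by (rule card_image_le)

lemma card_skel_G:
  assumes "acyclic E" shows "card (skel_G E) = card E"
proof -
  have "inj_on (\<lambda>(x,y). {x,y}) E"
    using acyclic_no_2cycle[OF assms] by (auto intro!: inj_onI simp: doubleton_eq_iff) blast+
  then show ?thesis unfolding skel_G_image by (rule card_image)
qed

lemma skel_P_subset_skel_G:
  assumes "dag V E" and "markovian V JP E"
  shows "skel_P V JP \<subseteq> skel_G E"
proof
  fix s assume "s \<in> skel_P V JP"
  then obtain i j where s: "s = {i,j}" and ij: "i\<in>V" "j\<in>V" "i\<noteq>j"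
    and no_sep: "\<not> (\<exists>C. C \<subseteq> V - {i,j} \<and> ({i},{j},C)\<in>JP)"
    unfolding skel_P_def by blast
  have "adj E i j"
    using nonadjacent_separated[OF assms(1) ij] no_sep assms(2) unfolding markovian_def by blast
  then show "s \<in> skel_G E" unfolding s by (simp only: skel_G_iff_adj)
qed

lemma skel_G_subset_if_J_G_subset:
  assumes dE: "dag V E" and dF: "dag V F" and J: "J_G V E \<subseteq> J_G V F"
  shows "skel_G F \<subseteq> skel_G E"
proof
  fix s assume "s \<in> skel_G F"
  then obtain x y where s: "s = {x,y}" and xy: "(x,y)\<in>F" unfolding skel_G_def by blast
  have V: "x\<in>V" "y\<in>V" using xy dF unfolding dag_def by auto
  have ne: "x \<noteq> y" using xy acyclic_no_loop[of F x] dF unfolding dag_def by auto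
  have "adj E x y"
    using nonadjacent_separated[OF dE V ne] J adjacent_not_in_J_G[OF xy ne] by blast
  then show "s \<in> skel_G E" unfolding s by (simp only: skel_G_iff_adj)
qed

lemma v_structure_iff_if_J_G_subset:
  assumes dE: "dag V E" and dF: "dag V F" and adj_iff: "\<And>p q. adj F p q \<longleftrightarrow> adj E p q"
    and J: "J_G V E \<subseteq> J_G V F"
  shows "v_structure E p q r \<longleftrightarrow> v_structure F p q r"
proof
  have acE: "acyclic E" and EV: "E \<subseteq> V \<times> V" using dE unfolding dag_def by auto
  assume "v_structure E p q r"
  then have pq: "(p,q)\<in>E" and rq: "(r,q)\<in>E" and pr: "p \<noteq> r" and na: "\<not> adj E p r"
    unfolding v_structure_def by auto
  obtain C where JE: "({p},{r},C)\<in>J_G V E" and C: "\<forall>w\<in>C. (w,p)\<in>E \<or> (w,r)\<in>E"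
    using nonadjacent_separated[OF dE _ _ pr na] pq rq EV by blast
  have "q \<notin> C" using C pq rq acyclic_no_2cycle[OF acE] by blast
  moreover have "is_path F p r [p,q,r]"
    using pq rq pr acyclic_no_loop[OF acE] adj_iff by (intro is_path_three) (auto simp: adj_def)
  ultimately have "(p,q)\<in>F \<and> (r,q)\<in>F"
    using J_G_singletons_no_active_path[of p r C V F "[p,q,r]"] JE J
    unfolding active_path_three open_triple_def by blast
  then show "v_structure F p q r" using pr na adj_iff unfolding v_structure_def by blast
next
  have FV: "F \<subseteq> V \<times> V" and acF: "acyclic F" using dF unfolding dag_def by auto
  assume "v_structure F p q r"
  then have pq: "(p,q)\<in>F" and rq: "(r,q)\<in>F" and pr: "p \<noteq> r" and na: "\<not> adj E p r"
    using adj_iff unfolding v_structure_def by auto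
  obtain C where JE: "({p},{r},C)\<in>J_G V E"
    using nonadjacent_separated[OF dE _ _ pr na] pq rq FV by blast
  have dist: "distinct [p,q,r]" using pq rq pr acyclic_no_loop[OF acF] by auto
  have "adj F p q" "adj F q r" using pq rq by (auto simp: adj_def)
  then have "is_path F p r [p,q,r]" "is_path E p r [p,q,r]"
    using dist adj_iff by (auto intro: is_path_three)
  then have "(p,q)\<in>E \<and> (r,q)\<in>E"
    using J_G_singletons_no_active_path[of p r C V F "[p,q,r]"]
      J_G_singletons_no_active_path[of p r C V E "[p,q,r]"] JE J pq rq
    unfolding active_path_three open_triple_def by blast
  then show "v_structure E p q r" using pr na unfolding v_structure_def by blast
qed

lemma J_G_subset_if_same_skeleton:
  assumes dE: "dag V E" and dF: "dag V F" and skel: "skel_G F = skel_G E"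
    and J: "J_G V E \<subseteq> J_G V F"
  shows "J_G V F \<subseteq> J_G V E"
proof -
  have adj_iff: "adj F p q \<longleftrightarrow> adj E p q" for p q
    using skel by (metis skel_G_iff_adj)
  interpret same_skeleton_and_v_structures E F
    using dE dF adj_iff v_structure_iff_if_J_G_subset[OF dE dF adj_iff J]
    by unfold_locales (auto simp: dag_def)
  show ?thesis
    unfolding J_G_def d_separated_def using active_path_transfer by blast
qed

lemma active_path_subgraph:
  assumes sub: "F \<subseteq> E" and ac: "acyclic E" and p: "is_path F a b xs" and act: "active_path F C xs"
  shows "is_path E a b xs \<and> active_path E C xs"
proof
  have adj_step: "\<And>i. Suc i < length xs \<Longrightarrow> adj F (xs!i) (xs!Suc i)"
    using p unfolding is_path_def by blast
  show "is_path E a b xs" using p sub unfolding is_path_def adj_def by blast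
  have same_edge: "(u,v)\<in>E \<longleftrightarrow> (u,v)\<in>F" if "adj F u v" for u v
    using that sub acyclic_no_2cycle[OF ac] unfolding adj_def by blast
  have desc: "F\<^sup>* \<subseteq> E\<^sup>*" using sub by (rule rtrancl_mono)
  have "open_triple E C (xs!(i-1)) (xs!i) (xs!Suc i)" if "0 < i" "Suc i < length xs" for i
    using act that adj_step[of "i-1"] adj_step[of i] same_edge[of "xs!(i-1)" "xs!i"]
      same_edge[of "xs!Suc i" "xs!i"]
    unfolding active_path_iff_open_triples open_triple_def
    by (auto simp: adj_commute dest: subsetD[OF desc])
  then show "active_path E C xs" unfolding active_path_iff_open_triples by blast
qed

lemma J_G_antimono:
  assumes "F \<subseteq> E" and "acyclic E"
  shows "J_G V E \<subseteq> J_G V F"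
  unfolding J_G_def d_separated_def using active_path_subgraph[OF assms] by blast

lemma minimally_markovian_imp_sparsest_markov:
  assumes "dag V E" and "minimally_markovian V JP E"
  shows "sparsest_markov V JP E"
proof -
  have "card E \<le> card E'" if dF: "dag V E'" and mF: "markovian V JP E'" for E'
  proof -
    have "acyclic E" using assms(1) unfolding dag_def by simp
    then have "card E = card (skel_G E)" by (simp add: card_skel_G)
    also have "\<dots> = card (skel_P V JP)"
      using assms(2) unfolding minimally_markovian_def adjacency_faithful_def by simp
    also have "\<dots> \<le> card (skel_G E')"
      using skel_P_subset_skel_G[OF dF mF] finite_skel_G[OF finite_dag_edges[OF dF]] by (rule card_mono[rotated])
    also have "\<dots> \<le> card E'" using card_skel_G_le[OF finite_dag_edges[OF dF]] .
    finally show ?thesis .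
  qed
  then show ?thesis using assms unfolding sparsest_markov_def minimally_markovian_def by blast
qed

lemma sparsest_markov_imp_pearl_minimal:
  assumes dE: "dag V E" and sparsest: "sparsest_markov V JP E"
  shows "pearl_minimal V JP E"
proof -
  have no_better: "\<not> (J_G V E \<subset> J_G V F \<and> J_G V F \<subseteq> JP)" if dF: "dag V F" for F
  proof
    assume J: "J_G V E \<subset> J_G V F \<and> J_G V F \<subseteq> JP"
    have sub: "skel_G F \<subseteq> skel_G E" using skel_G_subset_if_J_G_subset[OF dE dF] J by auto
    have fin: "finite (skel_G E)" using finite_skel_G[OF finite_dag_edges[OF dE]] .
    have "markovian V JP F" using J unfolding markovian_def by auto
    then have "card E \<le> card F" using sparsest dF unfolding sparsest_markov_def by auto
    moreover have "acyclic E" "acyclic F" using dE dF unfolding dag_def by auto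
    ultimately have "card (skel_G E) \<le> card (skel_G F)" by (simp add: card_skel_G)
    then have "card (skel_G F) = card (skel_G E)" using card_mono[OF fin sub] by linarith
    then have "skel_G F = skel_G E" by (rule card_subset_eq[OF fin sub])
    then have "J_G V F \<subseteq> J_G V E" using J_G_subset_if_same_skeleton[OF dE dF] J by auto
    then show False using J by auto
  qed
  have "markovian V JP E" using sparsest unfolding sparsest_markov_def by simp
  then show ?thesis using dE no_better unfolding pearl_minimal_def by auto
qed

text \<open>Deleting an edge x \<rightarrow> y only adds d-separations, and it adds one between x and y.\<close>
lemma pearl_minimal_imp_causally_minimal:
  assumes dE: "dag V E" and pm: "pearl_minimal V JP E"
  shows "causally_minimal V JP E"
proof -
  have acE: "acyclic E" using dE unfolding dag_def by simp
  have "\<not> markovian V JP F" if FE: "F \<subset> E" and dF: "dag V F" for F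
  proof
    assume mF: "markovian V JP F"
    obtain x y where xy: "(x,y)\<in>E" "(x,y)\<notin>F" using FE by auto
    have V: "x\<in>V" "y\<in>V" using xy dE unfolding dag_def by auto
    have ne: "x \<noteq> y" using xy acyclic_no_loop[OF acE] by blast
    have "\<not> adj F x y" using xy FE acyclic_no_2cycle[OF acE] unfolding adj_def by blast
    then obtain C where "({x},{y},C)\<in>J_G V F" using nonadjacent_separated[OF dF V ne] by blast
    then have "J_G V E \<subset> J_G V F"
      using J_G_antimono[of F E V] FE acE adjacent_not_in_J_G[OF xy(1) ne] by blast
    then show False using pm dF mF unfolding pearl_minimal_def markovian_def by blast
  qed
  then show ?thesis using pm unfolding causally_minimal_def pearl_minimal_def by blast
qed

theorem proposition1:
  fixes V :: "'a set" and E :: "('a \<times> 'a) set" and JP :: "'a triple set"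
  assumes "dag V E"
  shows "(minimally_markovian V JP E \<longrightarrow> sparsest_markov V JP E) \<and>
         (sparsest_markov V JP E \<longrightarrow> pearl_minimal V JP E) \<and>
         (pearl_minimal V JP E \<longrightarrow> causally_minimal V JP E)"
  using assms minimally_markovian_imp_sparsest_markov sparsest_markov_imp_pearl_minimal
    pearl_minimal_imp_causally_minimal by blast

end
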